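(* Fix a social state $x\in\mathcal{X}$ and $i_0\in(0,1)$, and let $I(t)$ solve $$\dot I^d_i(t)=-\gamma I^d_i(t)+\lambda(1-s^d_i)\bigl(1-I^d_i(t)\bigr)d\,\Theta(t),\qquad \Theta(t)=\frac{\sum_{d}\sum_{i} d\,x^d_iI^d_i(t)}{\bar d},$$ with $I^d_i(0)=i_0$ for all $d,i$. Then for every $d\in\{1,\dots,D\}$ and all $i,j\in\{1,\dots,n^d\}$ with $i>j$ (so $s^d_i>s^d_j$), we have $I^d_i(t)<I^d_j(t)$ for all $t>0$.
   Context: Setting: $D\in\mathbb{N}_+$ populations indexed by degree $d\in\{1,\dots,D\}$, degree distribution $m^d\in[0,1]$, $\sum_dm^d=1$, $\bar d=\sum_d d\,m^d>0$. Population $d$ has strategies $0\le s^d_1<\dots<s^d_{n^d}\le1$ (strictly increasing). A social state is $x=(x^d_i)$ with $x^d_i\ge0$, $\sum_ix^d_i=m^d$; $\mathcal{X}$ is the set of social states. Constants $\lambda>0$, $\gamma>0$. *)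

theory Defs
  imports "HOL-Analysis.Analysis"
begin

text \<open>Populations are indexed by degree d in {1..D}; population d has strategies
  indexed by i in {1..n d} with strategy values s d i.  A social state x assigns
  mass x d i to strategy i of population d.\<close>

definition social_state :: "nat \<Rightarrow> (nat \<Rightarrow> nat) \<Rightarrow> (nat \<Rightarrow> real) \<Rightarrow> (nat \<Rightarrow> nat \<Rightarrow> real) \<Rightarrow> bool" where
  "social_state D n m x \<longleftrightarrow>
     (\<forall>d\<in>{1..D}. (\<forall>i\<in>{1..n d}. x d i \<ge> 0) \<and> (\<Sum>i\<in>{1..n d}. x d i) = m d)"

definition mean_degree :: "nat \<Rightarrow> (nat \<Rightarrow> real) \<Rightarrow> real" where
  "mean_degree D m = (\<Sum>d\<in>{1..D}. real d * m d)"

definition Theta :: "nat \<Rightarrow> (nat \<Rightarrow> nat) \<Rightarrow> (nat \<Rightarrow> real) \<Rightarrow> (nat \<Rightarrow> nat \<Rightarrow> real)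
    \<Rightarrow> (nat \<Rightarrow> nat \<Rightarrow> real \<Rightarrow> real) \<Rightarrow> real \<Rightarrow> real" where
  "Theta D n m x I t =
     (\<Sum>d\<in>{1..D}. \<Sum>i\<in>{1..n d}. real d * x d i * I d i t) / mean_degree D m"

end

theory Submission
  imports Defs
begin

(* As long as all infection levels lie in [0,1], both I and 1 - I satisfy f' >= -K f with
   K = gamma + lam D, so a first-exit argument with the integrating factor exp (K t) keeps every
   I^d_i in (0,1).  Then Theta > 0, and the gap g = I^d_j - I^d_i (j < i) obeys g' > -K g whenever
   g >= 0, because the larger strategy s^d_i lowers the exposure (1 - s^d_i) d Theta.  As g(0) = 0,
   g stays positive for t > 0. *)

lemma exp_scaled_increasing:
  fixes f f' :: "real \<Rightarrow> real"
  assumes "a \<le> b"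
    and der: "\<And>t. t \<in> {a..b} \<Longrightarrow> (f has_real_derivative f' t) (at t within {a..b})"
    and bound: "\<And>t. t \<in> {a..b} \<Longrightarrow> f' t \<ge> - K * f t"
  shows "exp (K * a) * f a \<le> exp (K * b) * f b"
proof (rule DERIV_nonneg_imp_increasing_open[OF \<open>a \<le> b\<close>])
  fix t assume t: "a < t" "t < b"
  then have "(f has_real_derivative f' t) (at t)"
    using der[of t] by (simp add: at_within_Icc_at)
  then have "((\<lambda>t. exp (K * t) * f t) has_real_derivative exp (K * t) * (f' t + K * f t)) (at t)"
    by (auto intro!: derivative_eq_intros simp: algebra_simps)
  moreover have "f' t + K * f t \<ge> 0" using bound[of t] t by simp
  ultimately show "\<exists>y. ((\<lambda>t. exp (K * t) * f t) has_real_derivative y) (at t) \<and> 0 \<le> y"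
    by auto
next
  show "continuous_on {a..b} (\<lambda>t. exp (K * t) * f t)"
    using der by (intro continuous_intros DERIV_continuous_on) auto
qed

lemma finite_family_stays_positive:
  fixes f f' :: "'k \<Rightarrow> real \<Rightarrow> real"
  assumes "finite S"
    and pos: "\<And>k. k \<in> S \<Longrightarrow> f k a > 0"
    and der: "\<And>k t. k \<in> S \<Longrightarrow> a \<le> t \<Longrightarrow> (f k has_real_derivative f' k t) (at t within {a..})"
    and bound: "\<And>k t. k \<in> S \<Longrightarrow> a \<le> t \<Longrightarrow> (\<forall>l\<in>S. f l t \<ge> 0) \<Longrightarrow> f' k t \<ge> - K * f k t"
    and "k \<in> S" "a \<le> t"
  shows "f k t > 0"
proof (rule ccontr)
  assume "\<not> f k t > 0"
  have cont: "continuous_on {a..} (f l)" if "l \<in> S" for l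
    using der[OF that] by (intro DERIV_continuous_on) auto
  have zero_before: "\<exists>z\<in>{a..u}. f l z = 0" if "l \<in> S" "a \<le> u" "f l u \<le> 0" for l u
    using IVT2'[of "f l" u 0 a] that pos[of l] continuous_on_subset[OF cont[of l]] by force
  (* Inf Z is the first time some member vanishes; up to it the whole family is nonnegative,
     so exp (K u) * f k1 u cannot decrease from a positive value to 0 there. *)
  define Z where "Z = (\<Union>l\<in>S. {u \<in> {a..}. f l u = 0})"
  have "Z \<noteq> {}"
    using zero_before[of k t] assms \<open>\<not> f k t > 0\<close> unfolding Z_def by fastforce
  moreover have Z_bdd: "bdd_below Z" unfolding Z_def by (rule bdd_belowI[of _ a]) auto
  moreover have "closed Z" unfolding Z_def
    by (intro closed_UN \<open>finite S\<close> ballI continuous_closed_preimage_constant cont) auto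
  ultimately have "Inf Z \<in> Z" by (rule closed_contains_Inf)
  then obtain k1 where k1: "k1 \<in> S" "f k1 (Inf Z) = 0" "a \<le> Inf Z" unfolding Z_def by auto
  have nonneg: "f l u \<ge> 0" if l: "l \<in> S" and u: "u \<in> {a..Inf Z}" for l u
  proof (rule ccontr)
    assume neg: "\<not> f l u \<ge> 0"
    then obtain w where w: "w \<in> {a..u}" "f l w = 0" using zero_before[OF l] u by force
    then have "Inf Z \<le> w" using l Z_bdd unfolding Z_def by (auto intro!: cInf_lower)
    then have "w = u" using w u by auto
    then show False using w neg by simp
  qed
  have "exp (K * a) * f k1 a \<le> exp (K * Inf Z) * f k1 (Inf Z)"
  proof (rule exp_scaled_increasing[OF k1(3)])
    show "(f k1 has_real_derivative f' k1 u) (at u within {a..Inf Z})" if "u \<in> {a..Inf Z}" for u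
      using der[OF k1(1), of u] that by (auto intro: DERIV_subset)
    show "f' k1 u \<ge> - K * f k1 u" if "u \<in> {a..Inf Z}" for u
      using bound[OF k1(1)] nonneg that by auto
  qed
  moreover have "exp (K * a) * f k1 a > 0" using pos[OF k1(1)] by simp
  ultimately show False using k1 by simp
qed

lemma stays_positive_after_zero:
  fixes g g' :: "real \<Rightarrow> real"
  assumes zero: "g a = 0"
    and der: "\<And>t. a \<le> t \<Longrightarrow> (g has_real_derivative g' t) (at t within {a..})"
    and bound: "\<And>t. a \<le> t \<Longrightarrow> g t \<ge> 0 \<Longrightarrow> g' t > - K * g t"
    and "a < t"
  shows "g t > 0"
proof -
  have "g' a > 0" using bound[of a] zero by simp
  then obtain \<delta> where "\<delta> > 0" and \<delta>: "\<And>h. 0 < h \<Longrightarrow> h < \<delta> \<Longrightarrow> g (a + h) > 0"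
    using has_real_derivative_pos_inc_right[OF der[of a]] zero by force
  (* g is positive right after a, and from a + \<delta>/2 on the previous lemma applies. *)
  show ?thesis
  proof (cases "t < a + \<delta>")
    case True
    then show ?thesis using \<delta>[of "t - a"] \<open>a < t\<close> by simp
  next
    case False
    let ?t1 = "a + \<delta> / 2"
    show ?thesis
    proof (rule finite_family_stays_positive[where S = "{()}" and f = "\<lambda>_. g" and f' = "\<lambda>_. g'"
          and a = ?t1 and K = K and k = "()"])
      show "g ?t1 > 0" using \<delta>[of "\<delta> / 2"] \<open>\<delta> > 0\<close> by simp
      show "(g has_real_derivative g' u) (at u within {?t1..})" if "?t1 \<le> u" for u
        using der[of u] that \<open>\<delta> > 0\<close> by (auto intro: DERIV_subset)
      show "g' u \<ge> - K * g u" if "?t1 \<le> u" "\<forall>l\<in>{()}. g u \<ge> 0" for u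
        using bound[of u] that \<open>\<delta> > 0\<close> by simp
    qed (use False \<open>\<delta> > 0\<close> in simp_all)
  qed
qed

definition sis_rate :: "real \<Rightarrow> real \<Rightarrow> real \<Rightarrow> real \<Rightarrow> real" where
  "sis_rate \<gamma> lam c y = - \<gamma> * y + lam * c * (1 - y)"

lemma sis_rate_ge:
  assumes "0 \<le> y" "y \<le> 1" "0 \<le> lam" "0 \<le> c" "c \<le> C"
  shows "sis_rate \<gamma> lam c y \<ge> - (\<gamma> + lam * C) * y"
proof -
  have "lam * c * (1 - y) \<ge> 0" "lam * C * y \<ge> 0" using assms by simp_all
  then show ?thesis unfolding sis_rate_def by (simp add: algebra_simps)
qed

lemma sis_rate_le:
  assumes "0 \<le> \<gamma>" "y \<le> 1" "0 \<le> lam" "c \<le> C"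
  shows "- sis_rate \<gamma> lam c y \<ge> - (\<gamma> + lam * C) * (1 - y)"
proof -
  have "lam * (C - c) * (1 - y) \<ge> 0" using assms by simp
  then show ?thesis unfolding sis_rate_def using assms(1) by (simp add: algebra_simps)
qed

lemma sis_rate_diff_gt:
  assumes "0 < lam" "c < c'" "c' \<le> C" "y < 1" "y \<le> y'"
  shows "sis_rate \<gamma> lam c' y' - sis_rate \<gamma> lam c y > - (\<gamma> + lam * C) * (y' - y)"
proof -
  have "sis_rate \<gamma> lam c' y' - sis_rate \<gamma> lam c y
      = - (\<gamma> + lam * c') * (y' - y) + lam * (c' - c) * (1 - y)"
    unfolding sis_rate_def by (simp add: algebra_simps)
  moreover have "lam * (c' - c) * (1 - y) > 0" using assms by simp
  moreover have "lam * c' * (y' - y) \<le> lam * C * (y' - y)"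
    using assms by (intro mult_right_mono mult_left_mono) simp_all
  ultimately show ?thesis by (simp add: algebra_simps)
qed

lemma mean_degree_eq_sum_weights:
  assumes "social_state D n m x"
  shows "mean_degree D m = (\<Sum>d\<in>{1..D}. \<Sum>i\<in>{1..n d}. real d * x d i)"
  using assms unfolding mean_degree_def social_state_def
  by (auto simp: sum_distrib_left[symmetric] intro!: sum.cong)

lemma Theta_nonneg:
  assumes "social_state D n m x" "mean_degree D m > 0"
    and "\<And>d i. d \<in> {1..D} \<Longrightarrow> i \<in> {1..n d} \<Longrightarrow> 0 \<le> I d i t"
  shows "0 \<le> Theta D n m x I t"
  using assms unfolding Theta_def social_state_def by (auto intro!: sum_nonneg divide_nonneg_pos)

lemma Theta_le_one:
  assumes "social_state D n m x" "mean_degree D m > 0"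
    and "\<And>d i. d \<in> {1..D} \<Longrightarrow> i \<in> {1..n d} \<Longrightarrow> I d i t \<le> 1"
  shows "Theta D n m x I t \<le> 1"
proof -
  have "(\<Sum>d\<in>{1..D}. \<Sum>i\<in>{1..n d}. real d * x d i * I d i t)
      \<le> (\<Sum>d\<in>{1..D}. \<Sum>i\<in>{1..n d}. real d * x d i)"
    using assms unfolding social_state_def by (intro sum_mono mult_left_le) auto
  also have "\<dots> = mean_degree D m" using mean_degree_eq_sum_weights[OF assms(1)] by simp
  finally show ?thesis unfolding Theta_def using assms(2) by (simp add: pos_divide_le_eq)
qed

lemma Theta_pos:
  assumes "social_state D n m x" "mean_degree D m > 0"
    and "\<And>d i. d \<in> {1..D} \<Longrightarrow> i \<in> {1..n d} \<Longrightarrow> 0 < I d i t"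
  shows "0 < Theta D n m x I t"
proof -
  let ?A = "SIGMA d:{1..D}. {1..n d}"
  have w_nonneg: "\<forall>(d, i)\<in>?A. 0 \<le> real d * x d i" using assms(1) unfolding social_state_def by auto
  have "0 < (\<Sum>(d, i)\<in>?A. real d * x d i)"
    using assms(2) mean_degree_eq_sum_weights[OF assms(1)] by (simp add: sum.Sigma)
  then have "\<not> (\<forall>(d, i)\<in>?A. real d * x d i \<le> 0)"
    using sum_nonpos[of ?A "\<lambda>(d, i). real d * x d i"] by auto
  then obtain d i where di: "(d, i) \<in> ?A" "0 < real d * x d i" by auto
  have "0 \<le> real d * x d i * I d i t" if "(d, i) \<in> ?A" for d i
  proof -
    have "0 \<le> real d * x d i" "0 < I d i t" using w_nonneg assms(3) that by auto
    then show ?thesis by simp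
  qed
  then have "0 < (\<Sum>(d, i)\<in>?A. real d * x d i * I d i t)"
    using di assms(3) by (intro sum_pos2[OF _ di(1)]) auto
  then show ?thesis using assms(2) unfolding Theta_def by (simp add: sum.Sigma)
qed

locale sis_epidemic =
  fixes D :: nat and n :: "nat \<Rightarrow> nat" and m :: "nat \<Rightarrow> real"
    and s :: "nat \<Rightarrow> nat \<Rightarrow> real" and x :: "nat \<Rightarrow> nat \<Rightarrow> real"
    and lam \<gamma> i0 :: real and I :: "nat \<Rightarrow> nat \<Rightarrow> real \<Rightarrow> real"
  assumes dbar_pos: "mean_degree D m > 0"
    and s_range: "\<And>d i. d \<in> {1..D} \<Longrightarrow> i \<in> {1..n d} \<Longrightarrow> 0 \<le> s d i \<and> s d i \<le> 1"
    and s_mono: "\<And>d i j. d \<in> {1..D} \<Longrightarrow> i \<in> {1..n d} \<Longrightarrow> j \<in> {1..n d} \<Longrightarrow> j < i \<Longrightarrow> s d j < s d i"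
    and lam_pos: "lam > 0" and gamma_nonneg: "\<gamma> \<ge> 0"
    and x_state: "social_state D n m x"
    and i0_range: "0 < i0" "i0 < 1"
    and init: "\<And>d i. d \<in> {1..D} \<Longrightarrow> i \<in> {1..n d} \<Longrightarrow> I d i 0 = i0"
    and ode: "\<And>d i t. d \<in> {1..D} \<Longrightarrow> i \<in> {1..n d} \<Longrightarrow> 0 \<le> t \<Longrightarrow>
        (I d i has_real_derivative
          (- \<gamma> * I d i t + lam * (1 - s d i) * (1 - I d i t) * real d * Theta D n m x I t))
        (at t within {0..})"
begin

definition exposure :: "nat \<Rightarrow> nat \<Rightarrow> real \<Rightarrow> real" where
  "exposure d i t = (1 - s d i) * real d * Theta D n m x I t"

lemma I_has_derivative:
  assumes "d \<in> {1..D}" "i \<in> {1..n d}" "0 \<le> t"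
  shows "(I d i has_real_derivative sis_rate \<gamma> lam (exposure d i t) (I d i t)) (at t within {0..})"
proof -
  have "sis_rate \<gamma> lam (exposure d i t) (I d i t)
      = - \<gamma> * I d i t + lam * (1 - s d i) * (1 - I d i t) * real d * Theta D n m x I t"
    unfolding sis_rate_def exposure_def by (simp add: algebra_simps)
  then show ?thesis using ode[OF assms] by simp
qed

lemma exposure_bounds:
  assumes "d \<in> {1..D}" "i \<in> {1..n d}"
    and I_range: "\<And>d i. d \<in> {1..D} \<Longrightarrow> i \<in> {1..n d} \<Longrightarrow> 0 \<le> I d i t \<and> I d i t \<le> 1"
  shows "0 \<le> exposure d i t" "exposure d i t \<le> real D"
proof -
  have "0 \<le> Theta D n m x I t" "Theta D n m x I t \<le> 1"
    using Theta_nonneg[OF x_state dbar_pos] Theta_le_one[OF x_state dbar_pos] I_range by auto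
  moreover have "0 \<le> 1 - s d i" "1 - s d i \<le> 1" "real d \<le> real D" using s_range assms by auto
  moreover from calculation have "(1 - s d i) * real d \<le> 1 * real D" by (intro mult_mono) auto
  ultimately show "0 \<le> exposure d i t" "exposure d i t \<le> real D"
    unfolding exposure_def using mult_mono[of "(1 - s d i) * real d" "real D" "Theta D n m x I t" 1]
    by auto
qed

lemma rate_bounds_in_unit_cube:
  assumes ej: "e \<in> {1..D}" "j \<in> {1..n e}"
    and I_range: "\<And>d i. d \<in> {1..D} \<Longrightarrow> i \<in> {1..n d} \<Longrightarrow> 0 \<le> I d i t \<and> I d i t \<le> 1"
  shows "sis_rate \<gamma> lam (exposure e j t) (I e j t) \<ge> - (\<gamma> + lam * real D) * I e j t"
    and "- sis_rate \<gamma> lam (exposure e j t) (I e j t) \<ge> - (\<gamma> + lam * real D) * (1 - I e j t)"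
proof -
  have exposure: "0 \<le> exposure e j t" "exposure e j t \<le> real D"
    using exposure_bounds[OF ej I_range] by simp_all
  show "sis_rate \<gamma> lam (exposure e j t) (I e j t) \<ge> - (\<gamma> + lam * real D) * I e j t"
    using I_range[OF ej] exposure lam_pos by (intro sis_rate_ge) simp_all
  show "- sis_rate \<gamma> lam (exposure e j t) (I e j t) \<ge> - (\<gamma> + lam * real D) * (1 - I e j t)"
    using I_range[OF ej] exposure lam_pos gamma_nonneg by (intro sis_rate_le) simp_all
qed

lemma I_in_open_unit_interval:
  assumes "d \<in> {1..D}" "i \<in> {1..n d}" "0 \<le> t"
  shows "0 < I d i t \<and> I d i t < 1"
proof -
  define S where "S = (SIGMA d:{1..D}. {1..n d}) \<times> (UNIV :: bool set)"
  define f where "f = (\<lambda>((d, i), upper) t. if upper then I d i t else 1 - I d i t)"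
  define f' where "f' = (\<lambda>((d, i), upper) t.
      if upper then sis_rate \<gamma> lam (exposure d i t) (I d i t) else - sis_rate \<gamma> lam (exposure d i t) (I d i t))"
  have "f ((d, i), upper) t > 0" for upper
  proof (rule finite_family_stays_positive[where S = S and f = f and a = 0 and f' = f' and K = "\<gamma> + lam * real D"])
    show "finite S" unfolding S_def by auto
    show "f k 0 > 0" if "k \<in> S" for k
      using that init i0_range unfolding S_def f_def by auto
    show "(f k has_real_derivative f' k u) (at u within {0..})" if "k \<in> S" "0 \<le> u" for k u
    proof -
      obtain e j c where k: "k = ((e, j), c)" and ej: "e \<in> {1..D}" "j \<in> {1..n e}"
        using \<open>k \<in> S\<close> unfolding S_def by auto
      show ?thesis
        using I_has_derivative[OF ej \<open>0 \<le> u\<close>] DERIV_diff[OF DERIV_const I_has_derivative[OF ej \<open>0 \<le> u\<close>]]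
        unfolding k f_def f'_def by (cases c) simp_all
    qed
    show "f' k u \<ge> - (\<gamma> + lam * real D) * f k u" if "k \<in> S" "0 \<le> u" "\<forall>l\<in>S. f l u \<ge> 0" for k u
    proof -
      obtain e j c where k: "k = ((e, j), c)" and ej: "e \<in> {1..D}" "j \<in> {1..n e}"
        using \<open>k \<in> S\<close> unfolding S_def by auto
      have I_range: "0 \<le> I d' i' u \<and> I d' i' u \<le> 1" if "d' \<in> {1..D}" "i' \<in> {1..n d'}" for d' i'
      proof -
        have "((d', i'), True) \<in> S" "((d', i'), False) \<in> S" using that unfolding S_def by simp_all
        then have "f ((d', i'), True) u \<ge> 0" "f ((d', i'), False) u \<ge> 0"
          using \<open>\<forall>l\<in>S. f l u \<ge> 0\<close> by blast+
        then show ?thesis unfolding f_def by simp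
      qed
      show ?thesis
        using rate_bounds_in_unit_cube[OF ej I_range] unfolding k f_def f'_def by (cases c) simp_all
    qed
  qed (use assms in \<open>simp_all add: S_def\<close>)
  from this[of True] this[of False] show ?thesis unfolding f_def by simp
qed

lemma exposure_strict_anti:
  assumes d: "d \<in> {1..D}" and "i \<in> {1..n d}" "j \<in> {1..n d}" "j < i" "0 \<le> t"
  shows "exposure d i t < exposure d j t"
proof -
  have "0 < Theta D n m x I t"
    using Theta_pos[OF x_state dbar_pos] I_in_open_unit_interval \<open>0 \<le> t\<close> by blast
  moreover have "s d j < s d i" "0 < real d" using s_mono assms by auto
  ultimately show ?thesis unfolding exposure_def by (simp add: mult_strict_right_mono)
qed

lemma I_strict_anti:
  assumes d: "d \<in> {1..D}" and i: "i \<in> {1..n d}" and j: "j \<in> {1..n d}" and "j < i" and "0 < t"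
  shows "I d i t < I d j t"
proof -
  let ?rate = "\<lambda>i u. sis_rate \<gamma> lam (exposure d i u) (I d i u)"
  have "0 < I d j t - I d i t"
  proof (rule stays_positive_after_zero[where g = "\<lambda>u. I d j u - I d i u" and a = 0
        and g' = "\<lambda>u. ?rate j u - ?rate i u" and K = "\<gamma> + lam * real D"])
    show "I d j 0 - I d i 0 = 0" using init d i j by simp
    show "((\<lambda>u. I d j u - I d i u) has_real_derivative ?rate j u - ?rate i u) (at u within {0..})"
      if "0 \<le> u" for u
      using that by (intro DERIV_diff I_has_derivative d i j)
    show "?rate j u - ?rate i u > - (\<gamma> + lam * real D) * (I d j u - I d i u)"
      if "0 \<le> u" "0 \<le> I d j u - I d i u" for u
    proof (rule sis_rate_diff_gt[OF lam_pos])
      have I_range: "0 \<le> I d' i' u \<and> I d' i' u \<le> 1" if "d' \<in> {1..D}" "i' \<in> {1..n d'}" for d' i'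
        using I_in_open_unit_interval[OF that \<open>0 \<le> u\<close>] by simp
      show "exposure d i u < exposure d j u" using exposure_strict_anti assms \<open>0 \<le> u\<close> by blast
      show "exposure d j u \<le> real D" using exposure_bounds[OF d j I_range] by simp
      show "I d i u < 1" using I_in_open_unit_interval[OF d i \<open>0 \<le> u\<close>] by simp
    qed (use that in simp)
  qed (use \<open>0 < t\<close> in simp)
  then show ?thesis by simp
qed

end

theorem mainTheorem6:
  fixes D :: nat and n :: "nat \<Rightarrow> nat" and m :: "nat \<Rightarrow> real"
    and s :: "nat \<Rightarrow> nat \<Rightarrow> real" and x :: "nat \<Rightarrow> nat \<Rightarrow> real"
    and lam \<gamma> i0 :: real and I :: "nat \<Rightarrow> nat \<Rightarrow> real \<Rightarrow> real"
  assumes D_pos: "D \<ge> 1"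
    and n_pos: "\<forall>d\<in>{1..D}. n d \<ge> 1"
    and m_range: "\<forall>d\<in>{1..D}. 0 \<le> m d \<and> m d \<le> 1"
    and m_sum: "(\<Sum>d\<in>{1..D}. m d) = 1"
    and dbar_pos: "mean_degree D m > 0"
    and s_range: "\<forall>d\<in>{1..D}. \<forall>i\<in>{1..n d}. 0 \<le> s d i \<and> s d i \<le> 1"
    and s_mono: "\<forall>d\<in>{1..D}. \<forall>i\<in>{1..n d}. \<forall>j\<in>{1..n d}. j < i \<longrightarrow> s d j < s d i"
    and lam_pos: "lam > 0" and gamma_pos: "\<gamma> > 0"
    and x_state: "social_state D n m x"
    and i0_range: "0 < i0" "i0 < 1"
    and init: "\<forall>d\<in>{1..D}. \<forall>i\<in>{1..n d}. I d i 0 = i0"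
    and ode: "\<forall>d\<in>{1..D}. \<forall>i\<in>{1..n d}. \<forall>t\<ge>0.
        ((I d i) has_real_derivative
          (- \<gamma> * I d i t + lam * (1 - s d i) * (1 - I d i t) * real d * Theta D n m x I t))
        (at t within {0..})"
  shows "\<forall>d\<in>{1..D}. \<forall>i\<in>{1..n d}. \<forall>j\<in>{1..n d}. j < i \<longrightarrow>
           (\<forall>t>0. I d i t < I d j t)"
proof -
  interpret sis_epidemic D n m s x lam \<gamma> i0 I
    by unfold_locales (use assms in auto)
  show ?thesis using I_strict_anti by blast
qed

end
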